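(* Let $q$ be a prime power and $r\ge1$ an integer with $(r+1)\mid(q+1)$. Let $s$ be an integer with $2\le s\le\frac{q+1}{r+1}$ and $1\le t\le s$. Then there exists an $\mathbb{F}_q$-linear code of length $n=s(r+1)+1$, dimension $k=rt$ and locality $r$ whose minimum distance $d$ satisfies $d\ge n-rt-t+1$.
   Context: A linear code $C\subseteq\mathbb{F}_q^n$ has locality $r$ if for every coordinate $i$ there is a set $I_i\subseteq\{1,\dots,n\}\setminus\{i\}$ with $|I_i|\le r$ such that any two codewords agreeing on the coordinates in $I_i$ also agree in coordinate $i$. *)

theory Defs
  imports Complex_Main "HOL-Library.Function_Algebras"
begin

text \<open>Words of length n over a field F are modelled as functions nat => F
  supported on the coordinate set {0..<n}. Scalar multiplication is pointwise.\<close>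

definition scl :: "'a::field \<Rightarrow> (nat \<Rightarrow> 'a) \<Rightarrow> (nat \<Rightarrow> 'a)" where
  "scl c v = (\<lambda>i. c * v i)"

lemma vector_space_scl: "vector_space (scl :: 'a::field \<Rightarrow> _)"
  by unfold_locales (auto simp: scl_def algebra_simps fun_eq_iff)

definition linear_code :: "nat \<Rightarrow> (nat \<Rightarrow> 'a::field) set \<Rightarrow> bool" where
  "linear_code n C \<longleftrightarrow> module.subspace scl C \<and> (\<forall>v\<in>C. \<forall>i. n \<le> i \<longrightarrow> v i = 0)"

definition code_dim :: "(nat \<Rightarrow> 'a::field) set \<Rightarrow> nat" where
  "code_dim C = vector_space.dim scl C"

definition hamming_dist :: "nat \<Rightarrow> (nat \<Rightarrow> 'a) \<Rightarrow> (nat \<Rightarrow> 'a) \<Rightarrow> nat" where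
  "hamming_dist n x y = card {i\<in>{0..<n}. x i \<noteq> y i}"

definition min_dist :: "nat \<Rightarrow> (nat \<Rightarrow> 'a) set \<Rightarrow> nat" where
  "min_dist n C = Min {hamming_dist n x y | x y. x \<in> C \<and> y \<in> C \<and> x \<noteq> y}"

definition has_locality :: "nat \<Rightarrow> nat \<Rightarrow> (nat \<Rightarrow> 'a) set \<Rightarrow> bool" where
  "has_locality n r C \<longleftrightarrow> (\<forall>i<n. \<exists>I. I \<subseteq> {0..<n} - {i} \<and> card I \<le> r \<and>
     (\<forall>x\<in>C. \<forall>y\<in>C. (\<forall>j\<in>I. x j = y j) \<longrightarrow> x i = y i))"

end

(*
  The unit group of GF(q^2) is cyclic; modulo GF(q)^* it becomes a cyclic group of order q + 1
  acting simply transitively on the projective line P^1(GF(q)). Its subgroup of order r + 1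
  splits the line into (q + 1) / (r + 1) orbits, and the code uses s of them as coordinates,
  plus one coordinate that is identically zero.

  A message A(i, l), i < r, l < t, is encoded by evaluating the form
    F = sum A(i, l) X^i Y^(r-1-i) g0^l g1^(t-1-l)
  of degree D = (r - 1) + (r + 1)(t - 1), where g0 and g1 are the products of the linear forms
  vanishing on two of the orbits. On each orbit the pair (g0, g1) is proportional to a fixed
  vector, so F restricts there to a form of degree r - 1, and any r of the r + 1 values on an
  orbit determine the last one. A nonzero form of degree D has at most D zeros on the projective
  line, so nonzero codewords have weight at least s (r + 1) - D = n - r t - t + 1; and F only
  vanishes on all coordinates when A = 0, because the vectors (g0, g1) of different orbits are
  not proportional, which gives dimension r t.
*)

theory Submission
  imports Defs "HOL-Algebra.Multiplicative_Group" "HOL-Computational_Algebra.Polynomial"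
begin

section \<open>Points of the projective line and homogeneous forms\<close>

definition proj_injective :: "('i \<Rightarrow> 'a::field \<times> 'a) \<Rightarrow> 'i set \<Rightarrow> bool" where
  "proj_injective f I \<longleftrightarrow> (\<forall>i\<in>I. f i \<noteq> (0, 0)) \<and>
     (\<forall>i\<in>I. \<forall>j\<in>I. \<forall>c. f j = (c * fst (f i), c * snd (f i)) \<longrightarrow> j = i)"

lemma proj_injective_subset: "proj_injective f I \<Longrightarrow> J \<subseteq> I \<Longrightarrow> proj_injective f J"
  unfolding proj_injective_def by blast

text \<open>The value at \<open>(x, y)\<close> of the degree \<open>D\<close> homogenisation \<open>Y\<^sup>D p(X/Y)\<close> of \<open>p\<close>.\<close>

definition homog_eval :: "nat \<Rightarrow> 'a::field poly \<Rightarrow> 'a \<times> 'a \<Rightarrow> 'a" where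
  "homog_eval D p z = (\<Sum>i\<le>D. coeff p i * fst z ^ i * snd z ^ (D - i))"

lemma homog_eval_affine:
  assumes "degree p \<le> D" "snd z \<noteq> 0"
  shows "homog_eval D p z = snd z ^ D * poly p (fst z / snd z)"
proof -
  have "snd z ^ D * poly p (fst z / snd z) = (\<Sum>i\<le>D. snd z ^ D * (coeff p i * (fst z / snd z) ^ i))"
    by (subst poly_as_sum_of_monoms'[OF assms(1), symmetric])
      (simp add: poly_sum poly_monom sum_distrib_left)
  also have "\<dots> = (\<Sum>i\<le>D. coeff p i * fst z ^ i * snd z ^ (D - i))"
  proof (rule sum.cong[OF refl])
    fix i assume "i \<in> {..D}"
    then have "snd z ^ D = snd z ^ i * snd z ^ (D - i)" by (simp flip: power_add)
    then show "snd z ^ D * (coeff p i * (fst z / snd z) ^ i) = coeff p i * fst z ^ i * snd z ^ (D - i)"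
      using assms(2) by (simp add: power_divide field_simps)
  qed
  finally show ?thesis by (simp add: homog_eval_def)
qed

lemma homog_eval_infinity:
  assumes "snd z = 0"
  shows "homog_eval D p z = coeff p D * fst z ^ D"
proof -
  have "homog_eval D p z = (\<Sum>i\<le>D. if i = D then coeff p D * fst z ^ D else 0)"
    unfolding homog_eval_def using assms by (intro sum.cong) auto
  then show ?thesis by simp
qed

lemma homog_eval_0 [simp]: "homog_eval D 0 z = 0"
  by (simp add: homog_eval_def)

lemma homog_eval_add: "homog_eval D (p + p') z = homog_eval D p z + homog_eval D p' z"
  by (simp add: homog_eval_def algebra_simps sum.distrib)

lemma homog_eval_diff: "homog_eval D (p - p') z = homog_eval D p z - homog_eval D p' z"
  by (simp add: homog_eval_def algebra_simps sum_subtractf)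

lemma homog_eval_smult: "homog_eval D (smult c p) z = c * homog_eval D p z"
  by (simp add: homog_eval_def sum_distrib_left algebra_simps)

lemma homog_eval_sum: "homog_eval D (\<Sum>k\<in>A. f k) z = (\<Sum>k\<in>A. homog_eval D (f k) z)"
  by (induct A rule: infinite_finite_induct) (simp_all add: homog_eval_add)

lemma homog_eval_monom:
  assumes "i \<le> D"
  shows "homog_eval D (monom 1 i) z = fst z ^ i * snd z ^ (D - i)"
proof -
  have "homog_eval D (monom 1 i) z = (\<Sum>k\<le>D. if k = i then fst z ^ i * snd z ^ (D - i) else 0)"
    unfolding homog_eval_def by (intro sum.cong) (auto simp: coeff_monom)
  then show ?thesis using assms by simp
qed

lemma degree_sum_smult_monom_le:
  fixes c :: "nat \<Rightarrow> 'a::field"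
  shows "degree (\<Sum>i<n. smult (c i) (monom 1 i)) \<le> n - 1"
proof (rule degree_sum_le)
  fix i assume "i \<in> {..<n}"
  then have "degree (monom (1::'a) i) \<le> n - 1" by (simp add: degree_monom_eq)
  then show "degree (smult (c i) (monom 1 i)) \<le> n - 1" using degree_smult_le order_trans by blast
qed simp

lemma coeff_mult_le_degree_sum:
  assumes "degree p \<le> D1" "degree p' \<le> D2"
  shows "coeff (p * p') (D1 + D2) = coeff p D1 * coeff p' D2"
proof -
  have "coeff p i * coeff p' (D1 + D2 - i) = (if i = D1 then coeff p D1 * coeff p' D2 else 0)" for i
  proof (cases "i < D1")
    case True
    then have "coeff p' (D1 + D2 - i) = 0" using assms(2) by (intro coeff_eq_0) auto
    then show ?thesis using True by simp
  next
    case False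
    then show ?thesis using assms(1) by (cases "i = D1") (auto simp: coeff_eq_0)
  qed
  then show ?thesis by (simp add: coeff_mult)
qed

lemma homog_eval_mult:
  assumes "degree p \<le> D1" "degree p' \<le> D2"
  shows "homog_eval (D1 + D2) (p * p') z = homog_eval D1 p z * homog_eval D2 p' z"
proof (cases "snd z = 0")
  case True
  then show ?thesis by (simp add: homog_eval_infinity coeff_mult_le_degree_sum[OF assms] power_add)
next
  case False
  have "degree (p * p') \<le> D1 + D2" using assms degree_mult_le[of p p'] by simp
  then show ?thesis using False assms by (simp add: homog_eval_affine power_add)
qed

lemma degree_power_le_mult: "degree p \<le> d \<Longrightarrow> degree (p ^ l) \<le> d * l"
  by (metis degree_power_le le_trans mult.commute mult_le_mono1)

lemma homog_eval_power:
  assumes "degree p \<le> d"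
  shows "homog_eval (d * l) (p ^ l) z = homog_eval d p z ^ l"
proof (induct l)
  case (Suc l)
  have "homog_eval (d + d * l) (p * p ^ l) z = homog_eval d p z * homog_eval (d * l) (p ^ l) z"
    using assms degree_power_le_mult[OF assms] by (intro homog_eval_mult)
  then show ?case using Suc by simp
qed (simp add: homog_eval_def)

text \<open>The affine zeros are roots of \<open>p\<close>, and the point at infinity is a zero only if
  \<open>degree p < D\<close>.\<close>

lemma card_homog_zeros_le:
  fixes p :: "'a::field poly"
  assumes f: "proj_injective f I" and p: "p \<noteq> 0" "degree p \<le> D"
    and zero: "\<forall>i\<in>I. homog_eval D p (f i) = 0"
  shows "card I \<le> D"
proof (cases "finite I")
  case True
  define I_inf where "I_inf = {i\<in>I. snd (f i) = 0}"
  define I_fin where "I_fin = {i\<in>I. snd (f i) \<noteq> 0}"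
  have card_I: "card I = card I_inf + card I_fin"
    using True unfolding I_inf_def I_fin_def
    by (subst card_Un_disjoint[symmetric]) (auto intro: arg_cong[where f = card])
  have "inj_on (\<lambda>i. fst (f i) / snd (f i)) I_fin"
  proof (rule inj_onI)
    fix i j assume i: "i \<in> I_fin" and j: "j \<in> I_fin"
      and eq: "fst (f i) / snd (f i) = fst (f j) / snd (f j)"
    have "f j = (snd (f j) / snd (f i) * fst (f i), snd (f j) / snd (f i) * snd (f i))"
      using i j eq by (auto simp: I_fin_def field_simps prod_eq_iff)
    then show "i = j" using f i j unfolding proj_injective_def I_fin_def by blast
  qed
  moreover have "(\<lambda>i. fst (f i) / snd (f i)) ` I_fin \<subseteq> {x. poly p x = 0}"
  proof
    fix x assume "x \<in> (\<lambda>i. fst (f i) / snd (f i)) ` I_fin"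
    then obtain i where i: "i \<in> I_fin" "x = fst (f i) / snd (f i)" by blast
    then have "snd (f i) ^ D * poly p x = 0"
      using zero homog_eval_affine[OF p(2), of "f i"] by (auto simp: I_fin_def)
    then show "x \<in> {x. poly p x = 0}" using i by (auto simp: I_fin_def)
  qed
  ultimately have "card I_fin \<le> card {x. poly p x = 0}"
    using poly_roots_finite[OF p(1)] by (metis card_image card_mono)
  then have card_fin: "card I_fin \<le> degree p" using card_poly_roots_bound[OF p(1)] by linarith
  show ?thesis
  proof (cases "I_inf = {}")
    case True
    then show ?thesis using card_I card_fin p(2) by simp
  next
    case False
    then obtain i where i: "i \<in> I_inf" by blast
    have fst_nz: "fst (f j) \<noteq> 0" if "j \<in> I_inf" for j
      using f that unfolding proj_injective_def I_inf_def by (auto simp: prod_eq_iff)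
    have "j = i" if "j \<in> I_inf" for j
    proof -
      have "f j = (fst (f j) / fst (f i) * fst (f i), fst (f j) / fst (f i) * snd (f i))"
        using that i fst_nz[OF i] by (auto simp: I_inf_def prod_eq_iff)
      then show ?thesis using f i that unfolding proj_injective_def I_inf_def by blast
    qed
    then have "I_inf \<subseteq> {i}" by blast
    then have "card I_inf \<le> 1" using card_mono[of "{i}"] by simp
    moreover have "coeff p D = 0"
      using zero i fst_nz[OF i] by (auto simp: I_inf_def homog_eval_infinity)
    then have "degree p \<noteq> D" using p(1) by (metis leading_coeff_0_iff)
    ultimately show ?thesis using card_I card_fin p(2) by simp
  qed
qed simp


section \<open>A quadratic extension and a cyclic parametrisation of the projective line\<close>

text \<open>The pair \<open>(x, y)\<close> stands for \<open>x + y X\<close> in \<open>F[X] / (X\<^sup>2 - a X - b)\<close>.\<close>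

definition ext_mult :: "'a::field \<Rightarrow> 'a \<Rightarrow> 'a \<times> 'a \<Rightarrow> 'a \<times> 'a \<Rightarrow> 'a \<times> 'a" where
  "ext_mult a b z w =
     (fst z * fst w + b * snd z * snd w, fst z * snd w + snd z * fst w + a * snd z * snd w)"

definition quad_ext :: "'a::field \<Rightarrow> 'a \<Rightarrow> ('a \<times> 'a) ring" where
  "quad_ext a b = \<lparr>carrier = UNIV, monoid.mult = ext_mult a b, one = (1, 0), zero = (0, 0),
     add = (\<lambda>z w. (fst z + fst w, snd z + snd w))\<rparr>"

lemma carrier_quad_ext [simp]: "carrier (quad_ext a b) = UNIV"
  and zero_quad_ext [simp]: "\<zero>\<^bsub>quad_ext a b\<^esub> = (0, 0)"
  and one_quad_ext [simp]: "\<one>\<^bsub>quad_ext a b\<^esub> = (1, 0)"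
  and mult_quad_ext [simp]: "z \<otimes>\<^bsub>quad_ext a b\<^esub> w = ext_mult a b z w"
  by (simp_all add: quad_ext_def)

lemma ext_mult_scalar_left: "ext_mult a b (c, 0) z = (c * fst z, c * snd z)"
  by (simp add: ext_mult_def)

lemma ext_mult_scalar_right: "ext_mult a b z (c, 0) = (c * fst z, c * snd z)"
  by (simp add: ext_mult_def mult.commute)

lemma cring_quad_ext: "cring (quad_ext a b)"
proof (rule cringI)
  show "abelian_group (quad_ext a b)"
  proof (rule abelian_groupI)
    fix x :: "'a \<times> 'a"
    show "\<exists>y\<in>carrier (quad_ext a b). y \<oplus>\<^bsub>quad_ext a b\<^esub> x = \<zero>\<^bsub>quad_ext a b\<^esub>"
      by (rule bexI[of _ "(- fst x, - snd x)"]) (auto simp: quad_ext_def)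
  qed (auto simp: quad_ext_def algebra_simps)
  show "comm_monoid (quad_ext a b)"
    by (rule comm_monoidI) (auto simp: quad_ext_def ext_mult_def algebra_simps)
qed (auto simp: quad_ext_def ext_mult_def algebra_simps)

lemma field_quad_ext:
  fixes a b :: "'a::field"
  assumes irreducible: "\<forall>u. u * u \<noteq> a * u + b"
  shows "field (quad_ext a b)"
proof (rule cring.cring_fieldI2[OF cring_quad_ext])
  show "\<zero>\<^bsub>quad_ext a b\<^esub> \<noteq> \<one>\<^bsub>quad_ext a b\<^esub>" by (simp add: quad_ext_def)
next
  fix z :: "'a \<times> 'a" assume "z \<noteq> \<zero>\<^bsub>quad_ext a b\<^esub>"
  then obtain x y where z: "z = (x, y)" and nz: "(x, y) \<noteq> (0, 0)"
    by (cases z) (auto simp: quad_ext_def)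
  define N where "N = x * x + a * x * y - b * y * y"
  have "N \<noteq> 0"
  proof
    assume N0: "N = 0"
    show False
    proof (cases "y = 0")
      case True
      then show False using N0 nz by (simp add: N_def)
    next
      case False
      define u where "u = - x / y"
      have "u * u - (a * u + b) = N / (y * y)"
        using False by (simp add: u_def N_def field_simps)
      then have "u * u = a * u + b" using N0 by simp
      then show False using irreducible by blast
    qed
  qed
  have "x * ((x + a * y) / N) + b * y * (- y / N) = N / N"
    by (simp add: N_def field_simps)
  moreover have "x * (- y / N) + y * ((x + a * y) / N) + a * y * (- y / N) = 0"
    by (simp add: field_simps add_divide_distrib[symmetric] diff_divide_distrib[symmetric])
  ultimately have "ext_mult a b z ((x + a * y) / N, - y / N) = (1, 0)"
    using \<open>N \<noteq> 0\<close> by (simp add: z ext_mult_def)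
  then show "\<exists>w\<in>carrier (quad_ext a b). z \<otimes>\<^bsub>quad_ext a b\<^esub> w = \<one>\<^bsub>quad_ext a b\<^esub>"
    using \<open>N \<noteq> 0\<close> by (auto simp: quad_ext_def)
qed

lemma power_card_minus_1_eq_1:
  fixes c :: "'a::{finite,field}"
  assumes "c \<noteq> 0"
  shows "c ^ (card (UNIV :: 'a set) - 1) = 1"
proof -
  let ?U = "UNIV - {0::'a}"
  have "(\<Prod>x\<in>?U. c * x) = (\<Prod>x\<in>?U. x)"
    by (rule prod.reindex_bij_witness[of _ "\<lambda>y. y / c" "\<lambda>y. c * y"]) (use assms in auto)
  moreover have "(\<Prod>x\<in>?U. c * x) = c ^ (card (UNIV :: 'a set) - 1) * (\<Prod>x\<in>?U. x)"
    by (simp add: prod.distrib card_Diff_singleton)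
  moreover have "(\<Prod>x\<in>?U. x) \<noteq> 0" by simp
  ultimately show ?thesis by simp
qed

lemma exists_irreducible_quadratic: "\<exists>a b :: 'a::{finite,field}. \<forall>u. u * u \<noteq> a * u + b"
proof -
  let ?h = "\<lambda>u::'a. u * u - u"
  have "\<not> inj ?h"
    unfolding inj_def by (metis diff_self mult_1 mult_zero_left zero_neq_one)
  then have "\<not> surj ?h" by (meson finite_UNIV finite_UNIV_surj_inj)
  then obtain b where "b \<notin> range ?h" by blast
  have "u * u \<noteq> 1 * u + b" for u
  proof
    assume "u * u = 1 * u + b"
    then have "b = ?h u" by (simp add: algebra_simps)
    then show False using \<open>b \<notin> range ?h\<close> by blast
  qed
  then show ?thesis by blast
qed

lemma (in field) exists_primitive_element:
  assumes "finite (carrier R)"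
  shows "\<exists>g\<in>carrier R - {\<zero>}. (\<forall>z\<in>carrier R - {\<zero>}. \<exists>i::nat. z = g [^] i) \<and>
           (\<forall>i::nat. g [^] i = \<one> \<longleftrightarrow> (card (carrier R) - 1) dvd i)"
proof -
  interpret G: group "mult_of R" by (rule field_mult_group)
  obtain g where g: "g \<in> carrier (mult_of R)"
    and gen: "carrier (mult_of R) = {g [^] i | i::nat. i \<in> UNIV}"
    using finite_field_mult_group_has_gen[OF assms] by blast
  have "G.ord g \<noteq> 0" using G.ord_ge_1[OF finite_mult_of[OF assms] g] by simp
  then have "generate (mult_of R) {g} = carrier (mult_of R)"
    using G.generate_pow_nat[OF g] gen by (simp add: nat_pow_mult_of)
  then have "G.ord g = card (carrier (mult_of R))"
    using G.generate_pow_card[OF g] by simp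
  also have "\<dots> = card (carrier R) - 1"
    using order_mult_of[OF assms] by (simp add: order_def)
  finally have ord: "g [^] i = \<one> \<longleftrightarrow> (card (carrier R) - 1) dvd i" for i :: nat
    using G.pow_eq_id[OF g, of i] by (simp add: nat_pow_mult_of)
  have "\<exists>i::nat. z = g [^] i" if "z \<in> carrier R - {\<zero>}" for z
    using that gen by auto
  with g ord show ?thesis by auto
qed

definition mult_snd_form :: "'a::field \<Rightarrow> 'a \<times> 'a \<Rightarrow> 'a poly" where
  "mult_snd_form a w = [: fst w + a * snd w, snd w :]"

lemma homog_eval_mult_snd_form: "homog_eval 1 (mult_snd_form a w) z = snd (ext_mult a b w z)"
  by (simp add: homog_eval_def mult_snd_form_def ext_mult_def algebra_simps)

lemma degree_prod_mult_snd_form: "degree (\<Prod>k<n. mult_snd_form a (w k)) \<le> n"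
proof -
  have "degree (\<Prod>k<n. mult_snd_form a (w k)) \<le> (\<Sum>k<n. degree (mult_snd_form a (w k)))"
    using degree_prod_sum_le[of "{..<n}"] by (simp add: comp_def)
  also have "\<dots> \<le> (\<Sum>k<n. 1)" by (intro sum_mono) (simp add: mult_snd_form_def)
  finally show ?thesis by simp
qed

lemma homog_eval_prod_mult_snd_form:
  "homog_eval n (\<Prod>k<n. mult_snd_form a (w k)) z = (\<Prod>k<n. snd (ext_mult a b (w k) z))"
proof (induct n)
  case (Suc n)
  have "homog_eval (n + 1) ((\<Prod>k<n. mult_snd_form a (w k)) * mult_snd_form a (w n)) z
      = homog_eval n (\<Prod>k<n. mult_snd_form a (w k)) z * homog_eval 1 (mult_snd_form a (w n)) z"
    by (intro homog_eval_mult degree_prod_mult_snd_form) (simp add: mult_snd_form_def)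
  then show ?case using Suc by (simp add: homog_eval_mult_snd_form[unfolded One_nat_def])
qed (simp add: homog_eval_def)

text \<open>For \<open>j \<le> q\<close> the powers \<open>\<gamma> j = g\<^sup>j\<close> of a generator \<open>g\<close> of the multiplicative group of \<open>GF(q\<^sup>2)\<close>
  run once through \<open>P\<^sup>1(GF(q)) = GF(q\<^sup>2)\<^sup>* / GF(q)\<^sup>*\<close>, and \<open>g\<^sup>q\<^sup>+\<^sup>1 = c0\<close> is a scalar.\<close>

locale projective_cycle =
  fixes a b c0 :: "'a::field" and \<gamma> :: "nat \<Rightarrow> 'a \<times> 'a" and q :: nat
  assumes c0_nonzero: "c0 \<noteq> 0"
    and \<gamma>_add: "\<gamma> (i + j) = ext_mult a b (\<gamma> i) (\<gamma> j)"
    and snd_\<gamma>_eq_0_iff: "snd (\<gamma> j) = 0 \<longleftrightarrow> (q + 1) dvd j"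
    and \<gamma>_add_period: "\<gamma> (j + (q + 1)) = (c0 * fst (\<gamma> j), c0 * snd (\<gamma> j))"
    and proj_injective_\<gamma>: "proj_injective \<gamma> {..<q + 1}"

locale primitive_quad_ext =
  fixes a b :: "'a::{finite,field}" and g :: "'a \<times> 'a" and q :: nat
  assumes card_UNIV: "card (UNIV :: 'a set) = q"
    and irreducible: "\<forall>u. u * u \<noteq> a * u + b"
    and generates: "\<And>z. z \<noteq> (0, 0) \<Longrightarrow> \<exists>i. z = g [^]\<^bsub>quad_ext a b\<^esub> (i::nat)"
    and pow_eq_1_iff: "\<And>i::nat. g [^]\<^bsub>quad_ext a b\<^esub> i = (1, 0) \<longleftrightarrow> (q * q - 1) dvd i"
begin

definition \<gamma> :: "nat \<Rightarrow> 'a \<times> 'a" where "\<gamma> i = g [^]\<^bsub>quad_ext a b\<^esub> i"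

sublocale K: field "quad_ext a b" by (rule field_quad_ext[OF irreducible])

lemma two_le_q: "2 \<le> q"
proof -
  have "card {0::'a, 1} \<le> card (UNIV :: 'a set)" by (rule card_mono) auto
  then show ?thesis using card_UNIV by simp
qed

lemma \<gamma>_add: "\<gamma> (i + j) = ext_mult a b (\<gamma> i) (\<gamma> j)"
  using K.nat_pow_mult[of g i j] by (simp add: \<gamma>_def quad_ext_def)

lemma \<gamma>_mult: "\<gamma> (i * n) = \<gamma> i [^]\<^bsub>quad_ext a b\<^esub> n"
  using K.nat_pow_pow[of g i n] by (simp add: \<gamma>_def)

lemma scalar_pow: "(c, 0) [^]\<^bsub>quad_ext a b\<^esub> n = (c ^ n, 0)"
  by (induct n) (simp_all add: quad_ext_def ext_mult_def)

lemma \<gamma>_eq_1_iff: "\<gamma> i = (1, 0) \<longleftrightarrow> ((q + 1) * (q - 1)) dvd i"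
proof -
  have "q * q - 1 = (q + 1) * (q - 1)" using two_le_q by (simp add: algebra_simps)
  then show ?thesis using pow_eq_1_iff by (simp add: \<gamma>_def)
qed

lemma \<gamma>_nonzero: "\<gamma> j \<noteq> (0, 0)"
proof
  assume "\<gamma> j = (0, 0)"
  then have "\<gamma> (j * ((q + 1) * (q - 1))) = (0, 0)"
    using K.nat_pow_zero[of "(q + 1) * (q - 1)"] two_le_q by (simp add: \<gamma>_mult quad_ext_def)
  then show False using \<gamma>_eq_1_iff[of "j * ((q + 1) * (q - 1))"] by simp
qed

lemma \<gamma>_add_mult_order: "\<gamma> (j + (q + 1) * (q - 1) * d) = \<gamma> j"
  using \<gamma>_add[of j] \<gamma>_eq_1_iff[of "(q + 1) * (q - 1) * d"] by (simp add: ext_mult_scalar_right)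

lemma dvd_if_snd_\<gamma>_eq_0:
  assumes "snd (\<gamma> j) = 0"
  shows "(q + 1) dvd j"
proof -
  obtain x where x: "\<gamma> j = (x, 0)" using assms by (metis prod.collapse)
  then have "x \<noteq> 0" using \<gamma>_nonzero[of j] by auto
  have "\<gamma> (j * (q - 1)) = (x ^ (q - 1), 0)" using x by (simp add: \<gamma>_mult scalar_pow)
  then have "(q + 1) * (q - 1) dvd j * (q - 1)"
    using power_card_minus_1_eq_1[OF \<open>x \<noteq> 0\<close>] \<gamma>_eq_1_iff card_UNIV by simp
  then have "(q - 1) * (q + 1) dvd (q - 1) * j" by (simp only: mult.commute)
  then show ?thesis using two_le_q nat_mult_dvd_cancel_disj[of "q - 1" "q + 1" j] by simp
qed

text \<open>The \<open>q - 1\<close> elements \<open>\<gamma> ((q + 1) k)\<close>, \<open>k < q - 1\<close>, include all \<open>q - 1\<close> nonzero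
  scalars, so they are exactly the scalars.\<close>

lemma snd_\<gamma>_q_plus_1: "snd (\<gamma> (q + 1)) = 0"
proof -
  have \<gamma>_mod: "\<gamma> ((q + 1) * k) = \<gamma> ((q + 1) * (k mod (q - 1)))" for k
  proof -
    have "(q + 1) * k = (q + 1) * (k mod (q - 1) + (q - 1) * (k div (q - 1)))" by simp
    also have "\<dots> = (q + 1) * (k mod (q - 1)) + (q + 1) * (q - 1) * (k div (q - 1))"
      by (simp only: distrib_left mult.assoc)
    finally show ?thesis by (simp only: \<gamma>_add_mult_order)
  qed
  define scalars where "scalars = (\<lambda>c::'a. (c, 0::'a)) ` (UNIV - {0})"
  define P where "P = (\<lambda>k. \<gamma> ((q + 1) * k)) ` {..<q - 1}"
  have sub: "scalars \<subseteq> P"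
  proof
    fix z assume "z \<in> scalars"
    then obtain c where z: "z = (c, 0)" "c \<noteq> 0" unfolding scalars_def by blast
    then obtain j where j: "z = \<gamma> j" using generates by (auto simp: \<gamma>_def)
    then have "(q + 1) dvd j" using dvd_if_snd_\<gamma>_eq_0[of j] z by (metis snd_conv)
    then obtain k where "j = (q + 1) * k" by blast
    then have "z = \<gamma> ((q + 1) * (k mod (q - 1)))" using j \<gamma>_mod[of k] by simp
    moreover have "k mod (q - 1) < q - 1" using two_le_q by simp
    ultimately show "z \<in> P" unfolding P_def by blast
  qed
  have card_scalars: "card scalars = q - 1"
  proof -
    have "inj_on (\<lambda>c::'a. (c, 0::'a)) (UNIV - {0})" by (simp add: inj_on_def)
    then have "card scalars = card (UNIV - {0::'a})" unfolding scalars_def by (rule card_image)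
    also have "\<dots> = q - 1" using card_UNIV by (simp add: card_Diff_singleton)
    finally show ?thesis .
  qed
  have "card P \<le> q - 1" unfolding P_def using card_image_le[of "{..<q - 1}"] by simp
  moreover have "finite P" unfolding P_def by simp
  ultimately have "scalars = P" using card_seteq[OF _ sub] card_scalars by simp
  moreover have "\<gamma> (q + 1) \<in> P"
  proof -
    have "1 mod (q - 1) < q - 1" by (rule mod_less_divisor) (use two_le_q in simp)
    then have "1 mod (q - 1) \<in> {..<q - 1}" by simp
    moreover have "\<gamma> (q + 1) = \<gamma> ((q + 1) * (1 mod (q - 1)))" using \<gamma>_mod[of 1] by simp
    ultimately show ?thesis unfolding P_def by blast
  qed
  ultimately obtain c where "\<gamma> (q + 1) = (c, 0)" unfolding scalars_def by blast
  then show ?thesis by simp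
qed

lemma \<gamma>_q_plus_1: "\<gamma> (q + 1) = (fst (\<gamma> (q + 1)), 0)"
  using snd_\<gamma>_q_plus_1 by (simp add: prod_eq_iff)

lemma \<gamma>_add_period: "\<gamma> (j + (q + 1)) = (fst (\<gamma> (q + 1)) * fst (\<gamma> j), fst (\<gamma> (q + 1)) * snd (\<gamma> j))"
  using \<gamma>_add[of j "q + 1"] ext_mult_scalar_right[of a b "\<gamma> j" "fst (\<gamma> (q + 1))"]
  by (simp only: \<gamma>_q_plus_1[symmetric])

lemma snd_\<gamma>_eq_0_iff: "snd (\<gamma> j) = 0 \<longleftrightarrow> (q + 1) dvd j"
proof
  assume "(q + 1) dvd j"
  then obtain k where "j = (q + 1) * k" by blast
  then show "snd (\<gamma> j) = 0"
    using \<gamma>_mult[of "q + 1" k] scalar_pow[of "fst (\<gamma> (q + 1))" k] by (simp only: \<gamma>_q_plus_1[symmetric]) simp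
qed (rule dvd_if_snd_\<gamma>_eq_0)

lemma not_less_if_\<gamma>_scaled:
  assumes "j < q + 1" "\<gamma> j = (c * fst (\<gamma> i), c * snd (\<gamma> i))"
  shows "\<not> i < j"
proof
  assume "i < j"
  then have "\<gamma> (j - i) \<otimes>\<^bsub>quad_ext a b\<^esub> \<gamma> i = (c, 0) \<otimes>\<^bsub>quad_ext a b\<^esub> \<gamma> i"
    using \<gamma>_add[of "j - i" i] assms(2) by (simp add: quad_ext_def ext_mult_scalar_left)
  then have "\<gamma> (j - i) = (c, 0)"
    using K.m_rcancel[of "\<gamma> i"] \<gamma>_nonzero by (simp add: quad_ext_def)
  then have "(q + 1) dvd (j - i)" using dvd_if_snd_\<gamma>_eq_0 by simp
  then show False using \<open>i < j\<close> assms(1) by (auto dest: dvd_imp_le)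
qed

lemma proj_injective_\<gamma>: "proj_injective \<gamma> {..<q + 1}"
  unfolding proj_injective_def
proof (intro conjI ballI allI impI)
  fix i j c assume i: "i \<in> {..<q + 1}" and j: "j \<in> {..<q + 1}"
    and scaled: "\<gamma> j = (c * fst (\<gamma> i), c * snd (\<gamma> i))"
  have "c \<noteq> 0" using scaled \<gamma>_nonzero[of j] by auto
  then have "\<gamma> i = (inverse c * fst (\<gamma> j), inverse c * snd (\<gamma> j))"
    using scaled by (simp add: prod_eq_iff)
  then show "j = i" using not_less_if_\<gamma>_scaled i j scaled by (meson lessThan_iff linorder_neqE_nat)
qed (use \<gamma>_nonzero in simp)

lemma projective_cycle: "projective_cycle a b (fst (\<gamma> (q + 1))) \<gamma> q"
proof (rule projective_cycle.intro)
  show "fst (\<gamma> (q + 1)) \<noteq> 0" using \<gamma>_nonzero[of "q + 1"] snd_\<gamma>_q_plus_1 by (auto simp: prod_eq_iff)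
qed (fact \<gamma>_add \<gamma>_add_period snd_\<gamma>_eq_0_iff proj_injective_\<gamma>)+

end

lemma projective_cycle_exists:
  assumes "card (UNIV :: 'a::{finite,field} set) = q"
  shows "\<exists>a b c0 (\<gamma> :: nat \<Rightarrow> 'a \<times> 'a). projective_cycle a b c0 \<gamma> q"
proof -
  obtain a b :: 'a where irreducible: "\<forall>u. u * u \<noteq> a * u + b"
    using exists_irreducible_quadratic by blast
  interpret K: field "quad_ext a b" by (rule field_quad_ext[OF irreducible])
  have card_K: "card (carrier (quad_ext a b)) = q * q"
    using assms by (simp flip: UNIV_Times_UNIV add: card_cartesian_product)
  have "finite (carrier (quad_ext a b))" by simp
  from K.exists_primitive_element[OF this] obtain g
    where gen: "\<forall>z\<in>carrier (quad_ext a b) - {\<zero>\<^bsub>quad_ext a b\<^esub>}. \<exists>i::nat. z = g [^]\<^bsub>quad_ext a b\<^esub> i"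
      and ord: "\<forall>i::nat. g [^]\<^bsub>quad_ext a b\<^esub> i = \<one>\<^bsub>quad_ext a b\<^esub> \<longleftrightarrow>
                  (card (carrier (quad_ext a b)) - 1) dvd i"
    by blast
  have "primitive_quad_ext a b g q"
  proof
    show "\<exists>i::nat. z = g [^]\<^bsub>quad_ext a b\<^esub> i" if "z \<noteq> (0, 0)" for z
      using gen that by simp
    show "g [^]\<^bsub>quad_ext a b\<^esub> i = (1, 0) \<longleftrightarrow> (q * q - 1) dvd i" for i :: nat
      using ord card_K by simp
  qed (fact assms irreducible)+
  then show ?thesis using primitive_quad_ext.projective_cycle by blast
qed


section \<open>Locality and minimum distance of linear codes\<close>

lemma has_locality_subspaceI:
  assumes C: "module.subspace scl C"
    and recover: "\<And>i. i < n \<Longrightarrow> \<exists>I. I \<subseteq> {0..<n} - {i} \<and> card I \<le> r \<and>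
                    (\<forall>v\<in>C. (\<forall>j\<in>I. v j = 0) \<longrightarrow> v i = 0)"
  shows "has_locality n r C"
proof -
  interpret V: vector_space scl by (rule vector_space_scl)
  have "\<exists>I. I \<subseteq> {0..<n} - {i} \<and> card I \<le> r \<and>
      (\<forall>x\<in>C. \<forall>y\<in>C. (\<forall>j\<in>I. x j = y j) \<longrightarrow> x i = y i)" if i: "i < n" for i
  proof -
    obtain I where I: "I \<subseteq> {0..<n} - {i}" "card I \<le> r"
      and vanish: "\<And>v. v \<in> C \<Longrightarrow> \<forall>j\<in>I. v j = 0 \<Longrightarrow> v i = 0"
      using recover[OF i] by blast
    have "x i = y i" if "x \<in> C" "y \<in> C" "\<forall>j\<in>I. x j = y j" for x y
    proof -
      have "(x - y) i = 0" using vanish[OF V.subspace_diff[OF C that(1,2)]] that(3) by simp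
      then show ?thesis by simp
    qed
    with I show ?thesis by blast
  qed
  then show ?thesis unfolding has_locality_def by blast
qed

lemma min_dist_geI:
  assumes C: "module.subspace scl C" and v: "v \<in> C" "v \<noteq> 0"
    and weight: "\<And>w. w \<in> C \<Longrightarrow> w \<noteq> 0 \<Longrightarrow> d \<le> card {i\<in>{0..<n}. w i \<noteq> 0}"
  shows "d \<le> min_dist n C"
proof -
  interpret V: vector_space scl by (rule vector_space_scl)
  define M where "M = {hamming_dist n x y | x y. x \<in> C \<and> y \<in> C \<and> x \<noteq> y}"
  have "M \<subseteq> {..n}"
  proof
    fix h assume "h \<in> M"
    then obtain x y :: "nat \<Rightarrow> 'a" where h: "h = hamming_dist n x y" unfolding M_def by blast
    have "card {i\<in>{0..<n}. x i \<noteq> y i} \<le> card {0..<n}" by (rule card_mono) auto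
    then show "h \<in> {..n}" by (simp add: h hamming_dist_def)
  qed
  then have "finite M" by (rule finite_subset) simp
  moreover have "hamming_dist n v 0 \<in> M" using v V.subspace_0[OF C] unfolding M_def by auto
  then have "M \<noteq> {}" by blast
  moreover have "d \<le> h" if "h \<in> M" for h
  proof -
    obtain x y where xy: "x \<in> C" "y \<in> C" "x \<noteq> y" and h: "h = hamming_dist n x y"
      using \<open>h \<in> M\<close> unfolding M_def by blast
    have "x - y \<noteq> 0" using xy(3) by simp
    then have "d \<le> card {i\<in>{0..<n}. (x - y) i \<noteq> 0}" by (rule weight[OF V.subspace_diff[OF C xy(1,2)]])
    also have "{i\<in>{0..<n}. (x - y) i \<noteq> 0} = {i\<in>{0..<n}. x i \<noteq> y i}" by auto
    finally show ?thesis by (simp add: h hamming_dist_def)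
  qed
  ultimately show ?thesis unfolding min_dist_def M_def[symmetric] by (simp add: Min_ge_iff)
qed


section \<open>The construction\<close>

locale lrc_construction = projective_cycle a b c0 \<gamma> q
  for a b c0 :: "'a::field" and \<gamma> q +
  fixes r s t :: nat
  assumes r_pos: "1 \<le> r" and orbit_size_dvd: "(r + 1) dvd (q + 1)"
    and two_le_s: "2 \<le> s" and s_le: "s \<le> (q + 1) div (r + 1)"
    and t_pos: "1 \<le> t" and t_le_s: "t \<le> s"
begin

definition m :: nat where "m = r + 1"

definition e :: nat where "e = (q + 1) div m"

lemma m_pos [simp]: "0 < m"
  by (simp add: m_def)

lemma q_plus_1_eq: "q + 1 = e * m"
  unfolding e_def m_def by (rule dvd_div_mult_self[symmetric, OF orbit_size_dvd])

lemma s_le_e: "s \<le> e"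
  using s_le by (simp add: e_def m_def)

lemma two_le_e: "2 \<le> e"
  using s_le_e two_le_s by simp

text \<open>The subgroup of order \<open>m\<close> of the cycle acts on the \<open>q + 1\<close> points with the orbits
  \<open>{\<gamma> (u + e * k) | k < m}\<close>, \<open>u < e\<close>.\<close>

lemma orbit_index_less: "u < e \<Longrightarrow> k < m \<Longrightarrow> u + e * k < q + 1"
proof -
  assume "u < e" "k < m"
  then have "u + e * k < e * (k + 1)" by simp
  also have "\<dots> \<le> e * m" using \<open>k < m\<close> by (intro mult_le_mono2) simp
  finally show ?thesis using q_plus_1_eq by simp
qed

lemma orbit_index_inject:
  assumes "u < e" "u' < e" "u + e * k = u' + e * k'"
  shows "u = u' \<and> k = k'"
proof -
  have "(u + e * k) mod e = u" "(u' + e * k') mod e = u'" using assms(1,2) by simp_all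
  then have "u = u'" using assms(3) by simp
  then show ?thesis using assms(3) two_le_e by simp
qed

lemma card_\<gamma>_zeros_le:
  assumes "J \<subseteq> {..<q + 1}" "p \<noteq> 0" "degree p \<le> D"
    and "\<forall>j\<in>J. homog_eval D p (\<gamma> j) = 0"
  shows "card J \<le> D"
  using card_homog_zeros_le[OF proj_injective_subset[OF proj_injective_\<gamma> assms(1)] assms(2-4)] .

text \<open>\<open>orbit_form v\<close> is the product of the linear forms \<open>z \<mapsto> snd (\<gamma> (e k + v) z)\<close>; it vanishes
  at \<open>\<gamma> j\<close> iff \<open>e\<close> divides \<open>v + j\<close>, i.e. on one whole orbit.\<close>

definition orbit_form :: "nat \<Rightarrow> 'a poly" where
  "orbit_form v = (\<Prod>k<m. mult_snd_form a (\<gamma> (e * k + v)))"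

definition orbit_val :: "nat \<Rightarrow> nat \<Rightarrow> 'a" where
  "orbit_val v j = (\<Prod>k<m. snd (\<gamma> (e * k + v + j)))"

lemma degree_orbit_form: "degree (orbit_form v) \<le> m"
  unfolding orbit_form_def by (rule degree_prod_mult_snd_form)

lemma homog_eval_orbit_form: "homog_eval m (orbit_form v) (\<gamma> j) = orbit_val v j"
  unfolding orbit_form_def orbit_val_def homog_eval_prod_mult_snd_form[of _ _ _ _ b]
  by (simp flip: \<gamma>_add)

lemma orbit_val_add_period: "orbit_val v (j + e) = c0 * orbit_val v j"
proof -
  define f where "f k = snd (\<gamma> (e * k + v + j))" for k
  have "orbit_val v (j + e) = (\<Prod>k<Suc r. f (Suc k))"
    unfolding orbit_val_def f_def m_def by (intro prod.cong) (simp_all add: algebra_simps)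
  also have "\<dots> = (\<Prod>k<r. f (Suc k)) * f m" by (simp add: m_def)
  also have "f m = c0 * f 0"
  proof -
    have "e * m + v + j = (v + j) + (q + 1)" using q_plus_1_eq by simp
    then have "f m = snd (\<gamma> ((v + j) + (q + 1)))" by (simp only: f_def)
    also have "\<dots> = c0 * snd (\<gamma> (v + j))" by (simp only: \<gamma>_add_period snd_conv)
    finally show ?thesis by (simp add: f_def)
  qed
  also have "(\<Prod>k<r. f (Suc k)) * (c0 * f 0) = c0 * (f 0 * (\<Prod>k<r. f (Suc k)))" by simp
  also have "f 0 * (\<Prod>k<r. f (Suc k)) = orbit_val v j"
    unfolding orbit_val_def f_def m_def Suc_eq_plus1[symmetric] prod.lessThan_Suc_shift by simp
  finally show ?thesis .
qed

lemma orbit_val_add_mult_period: "orbit_val v (j + e * k) = c0 ^ k * orbit_val v j"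
proof (induct k)
  case (Suc k)
  have eq: "j + e * Suc k = (j + e * k) + e" by simp
  have "orbit_val v (j + e * Suc k) = c0 * orbit_val v (j + e * k)"
    unfolding eq by (rule orbit_val_add_period)
  then show ?case using Suc by simp
qed simp

lemma orbit_val_eq_0: "(q + 1) dvd v + j \<Longrightarrow> orbit_val v j = 0"
  unfolding orbit_val_def using snd_\<gamma>_eq_0_iff[of "v + j"]
  by (intro prod_zero) (auto intro!: bexI[of _ 0])

lemma dvd_if_orbit_val_eq_0:
  assumes "orbit_val v j = 0"
  shows "e dvd v + j"
proof -
  obtain k where "snd (\<gamma> (e * k + v + j)) = 0"
    using assms unfolding orbit_val_def by (auto simp: prod_zero_iff)
  then have "(q + 1) dvd e * k + (v + j)" using snd_\<gamma>_eq_0_iff by (simp add: add.assoc)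
  then have "e dvd e * k + (v + j)" by (rule dvd_trans[rotated]) (simp only: q_plus_1_eq dvd_triv_left)
  then show ?thesis by (simp add: dvd_add_right_iff)
qed

text \<open>On orbit \<open>u\<close> the pair of values \<open>(orbit_form 0, orbit_form 1)\<close> is \<open>c0\<^sup>k\<close> times
  \<open>orbit_pt u\<close>; so \<open>orbit_pt\<close> plays the role of a good polynomial, constant on each orbit.\<close>

definition orbit_pt :: "nat \<Rightarrow> 'a \<times> 'a" where
  "orbit_pt u = (orbit_val 0 u, orbit_val 1 u)"

lemma orbit_pt_nonzero: "orbit_pt u \<noteq> (0, 0)"
proof
  assume "orbit_pt u = (0, 0)"
  then have "e dvd u" "e dvd 1 + u"
    using dvd_if_orbit_val_eq_0[of 0 u] dvd_if_orbit_val_eq_0[of 1 u] by (simp_all add: orbit_pt_def)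
  then have "e dvd 1" using dvd_add_left_iff by blast
  then show False using two_le_e by simp
qed

lemma orbit_val_1_0: "orbit_val 1 0 \<noteq> 0"
  using dvd_if_orbit_val_eq_0[of 1 0] two_le_e by auto

lemma orbit_val_0_q: "orbit_val 0 q \<noteq> 0"
proof
  assume "orbit_val 0 q = 0"
  then have "e dvd q" using dvd_if_orbit_val_eq_0 by fastforce
  moreover have "e dvd q + 1" using q_plus_1_eq by simp
  ultimately have "e dvd 1" using dvd_add_right_iff by blast
  then show False using two_le_e by simp
qed

text \<open>The form \<open>H\<close> below vanishes wherever \<open>(orbit_form 0 : orbit_form 1)\<close> equals
  \<open>orbit_pt u'\<close>; two proportional orbit points give it \<open>2 m > m\<close> zeros.\<close>

lemma orbit_pt_scaled_imp_eq:
  assumes u: "u < e" and u': "u' < e"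
    and scaled: "orbit_pt u = (c * fst (orbit_pt u'), c * snd (orbit_pt u'))"
  shows "u = u'"
proof (rule ccontr)
  assume "u \<noteq> u'"
  define H where "H = smult (orbit_val 1 u') (orbit_form 0) - smult (orbit_val 0 u') (orbit_form 1)"
  have deg_H: "degree H \<le> m"
    unfolding H_def by (intro degree_diff_le order_trans[OF degree_smult_le] degree_orbit_form)
  have H_val: "homog_eval m H (\<gamma> j) = orbit_val 1 u' * orbit_val 0 j - orbit_val 0 u' * orbit_val 1 j"
    for j unfolding H_def homog_eval_diff homog_eval_smult homog_eval_orbit_form ..
  define J where "J = (\<lambda>k. u + e * k) ` {..<m} \<union> (\<lambda>k. u' + e * k) ` {..<m}"
  have J_sub: "J \<subseteq> {..<q + 1}" using orbit_index_less u u' by (auto simp: J_def)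
  have "card J = m + m"
  proof -
    have "inj_on (\<lambda>k. w + e * k) K" for w K using two_le_e by (intro inj_onI) simp
    moreover have "(\<lambda>k. u + e * k) ` {..<m} \<inter> (\<lambda>k. u' + e * k) ` {..<m} = {}"
      using orbit_index_inject[OF u u'] \<open>u \<noteq> u'\<close> by blast
    ultimately show ?thesis unfolding J_def by (simp add: card_Un_disjoint card_image)
  qed
  moreover have "homog_eval m H (\<gamma> (w + e * k)) = 0" if "w = u \<or> w = u'" for w k
  proof -
    have "orbit_val 0 w = (if w = u then c else 1) * orbit_val 0 u'"
      and "orbit_val 1 w = (if w = u then c else 1) * orbit_val 1 u'"
      using that scaled \<open>u \<noteq> u'\<close> by (auto simp: orbit_pt_def)
    then show ?thesis by (simp add: H_val orbit_val_add_mult_period)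
  qed
  then have "\<forall>j\<in>J. homog_eval m H (\<gamma> j) = 0" by (auto simp: J_def)
  ultimately have "H = 0"
    using card_\<gamma>_zeros_le[OF J_sub _ deg_H] m_pos by (cases "H = 0") simp_all
  then have "orbit_val 0 u' * orbit_val 1 0 = 0" "orbit_val 1 u' * orbit_val 0 q = 0"
    using H_val[of 0] H_val[of q] orbit_val_eq_0[of 0 0] orbit_val_eq_0[of 1 q] by simp_all
  then show False using orbit_val_1_0 orbit_val_0_q orbit_pt_nonzero[of u'] by (simp add: orbit_pt_def)
qed

lemma proj_injective_orbit_pt: "proj_injective orbit_pt {..<e}"
  unfolding proj_injective_def using orbit_pt_nonzero orbit_pt_scaled_imp_eq by blast

text \<open>Coordinate \<open>u * m + k\<close> (\<open>u < s\<close>, \<open>k < m\<close>) of the code is the point \<open>\<gamma> (u + e k)\<close> of orbit \<open>u\<close>.\<close>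

definition coord_index :: "nat \<Rightarrow> nat" where
  "coord_index j = j div m + e * (j mod m)"

lemma coord_index_block:
  assumes "k < m"
  shows "coord_index (u * m + k) = u + e * k"
proof -
  have "(u * m + k) div m = u" using div_mult_self3[of m u k] div_less[OF assms] by simp
  moreover have "(u * m + k) mod m = k" using mod_mult_self3[of u m k] mod_less[OF assms] by simp
  ultimately show ?thesis by (simp add: coord_index_def)
qed

lemma block_div_less: "j < s * m \<Longrightarrow> j div m < s"
  by (simp add: div_less_iff_less_mult)

lemma block_less: "u < s \<Longrightarrow> k < m \<Longrightarrow> u * m + k < s * m"
proof -
  assume "u < s" "k < m"
  then have "u * m + k < (u + 1) * m" by simp
  also have "\<dots> \<le> s * m" using \<open>u < s\<close> by (intro mult_le_mono1) simp
  finally show ?thesis .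
qed

lemma coord_index_less:
  assumes "j < s * m"
  shows "coord_index j < q + 1"
proof -
  have "j div m < e" "j mod m < m" using block_div_less[OF assms] s_le_e by simp_all
  then show ?thesis unfolding coord_index_def by (rule orbit_index_less)
qed

lemma inj_on_coord_index: "inj_on coord_index {..<s * m}"
proof (rule inj_onI)
  fix j j' assume j: "j \<in> {..<s * m}" and j': "j' \<in> {..<s * m}"
    and eq: "coord_index j = coord_index j'"
  have "j div m < e" "j' div m < e"
    using block_div_less[of j] block_div_less[of j'] j j' s_le_e by simp_all
  then have "j div m = j' div m \<and> j mod m = j' mod m"
    using eq unfolding coord_index_def by (rule orbit_index_inject)
  then have "j div m * m + j mod m = j' div m * m + j' mod m" by simp
  then show "j = j'" by simp
qed

definition D :: nat where "D = (r - 1) + m * (t - 1)"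

definition msg_index :: "(nat \<times> nat) set" where "msg_index = {..<r} \<times> {..<t}"

lemma finite_msg_index [simp]: "finite msg_index"
  by (simp add: msg_index_def)

definition msg_monomial :: "nat \<times> nat \<Rightarrow> 'a poly" where
  "msg_monomial p = monom 1 (fst p) * (orbit_form 0 ^ snd p * orbit_form 1 ^ (t - 1 - snd p))"

definition msg_poly :: "(nat \<times> nat \<Rightarrow> 'a) \<Rightarrow> 'a poly" where
  "msg_poly A = (\<Sum>p\<in>msg_index. smult (A p) (msg_monomial p))"

definition codeword :: "(nat \<times> nat \<Rightarrow> 'a) \<Rightarrow> nat \<Rightarrow> 'a" where
  "codeword A j = (if j < s * m then homog_eval D (msg_poly A) (\<gamma> (coord_index j)) else 0)"

lemma msg_monomial_facts:
  assumes "p \<in> msg_index"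
  shows "degree (msg_monomial p) \<le> D"
    and "homog_eval D (msg_monomial p) z = fst z ^ fst p * snd z ^ (r - 1 - fst p)
           * homog_eval m (orbit_form 0) z ^ snd p * homog_eval m (orbit_form 1) z ^ (t - 1 - snd p)"
proof -
  obtain i l where p: "p = (i, l)" "i < r" "l < t" using assms by (auto simp: msg_index_def)
  have l_sum: "l + (t - 1 - l) = t - 1" using p by simp
  have D_eq: "D = (r - 1) + (m * l + m * (t - 1 - l))"
    unfolding D_def add_mult_distrib2[symmetric] l_sum by (rule refl)
  have deg_i: "degree (monom (1::'a) i) \<le> r - 1" using p by (simp add: degree_monom_eq)
  have deg_l: "degree (orbit_form 0 ^ l * orbit_form 1 ^ (t - 1 - l)) \<le> m * l + m * (t - 1 - l)"
    by (intro order_trans[OF degree_mult_le] add_mono degree_power_le_mult degree_orbit_form)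
  show "degree (msg_monomial p) \<le> D"
    unfolding msg_monomial_def p D_eq fst_conv snd_conv
    by (intro order_trans[OF degree_mult_le] add_mono deg_i deg_l)
  show "homog_eval D (msg_monomial p) z = fst z ^ fst p * snd z ^ (r - 1 - fst p)
           * homog_eval m (orbit_form 0) z ^ snd p * homog_eval m (orbit_form 1) z ^ (t - 1 - snd p)"
  proof -
    have "homog_eval D (msg_monomial p) z = homog_eval (r - 1) (monom 1 i) z
        * homog_eval (m * l + m * (t - 1 - l)) (orbit_form 0 ^ l * orbit_form 1 ^ (t - 1 - l)) z"
      unfolding msg_monomial_def p D_eq fst_conv snd_conv by (rule homog_eval_mult[OF deg_i deg_l])
    also have "homog_eval (m * l + m * (t - 1 - l)) (orbit_form 0 ^ l * orbit_form 1 ^ (t - 1 - l)) z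
        = homog_eval m (orbit_form 0) z ^ l * homog_eval m (orbit_form 1) z ^ (t - 1 - l)"
      by (simp only: homog_eval_power[OF degree_orbit_form]
          homog_eval_mult[OF degree_power_le_mult degree_power_le_mult, OF degree_orbit_form degree_orbit_form])
    also have "homog_eval (r - 1) (monom 1 i) z = fst z ^ i * snd z ^ (r - 1 - i)"
      using p by (simp add: homog_eval_monom)
    finally show ?thesis using p by (simp add: mult.assoc)
  qed
qed

lemma degree_msg_poly: "degree (msg_poly A) \<le> D"
  unfolding msg_poly_def
proof (rule degree_sum_le)
  fix p assume "p \<in> msg_index"
  then show "degree (smult (A p) (msg_monomial p)) \<le> D"
    using degree_smult_le msg_monomial_facts(1) order_trans by blast
qed simp

lemma codeword_apply:
  "codeword A j = (if j < s * m
     then \<Sum>p\<in>msg_index. A p * homog_eval D (msg_monomial p) (\<gamma> (coord_index j)) else 0)"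
  by (simp add: codeword_def msg_poly_def homog_eval_sum homog_eval_smult)

text \<open>Restricted to orbit \<open>u\<close>, the message polynomial agrees up to the factor \<open>c0\<^sup>k\<^sup>(\<^sup>t\<^sup>-\<^sup>1\<^sup>)\<close>
  with the local form below, of degree only \<open>r - 1\<close>: this is where locality comes from.\<close>

definition local_coeff :: "(nat \<times> nat \<Rightarrow> 'a) \<Rightarrow> nat \<Rightarrow> nat \<Rightarrow> 'a" where
  "local_coeff A u i = (\<Sum>l<t. A (i, l) * orbit_val 0 u ^ l * orbit_val 1 u ^ (t - 1 - l))"

definition local_poly :: "(nat \<times> nat \<Rightarrow> 'a) \<Rightarrow> nat \<Rightarrow> 'a poly" where
  "local_poly A u = (\<Sum>i<r. smult (local_coeff A u i) (monom 1 i))"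

lemma degree_local_poly: "degree (local_poly A u) \<le> r - 1"
  unfolding local_poly_def by (rule degree_sum_smult_monom_le)

lemma coeff_local_poly:
  assumes "i < r"
  shows "coeff (local_poly A u) i = local_coeff A u i"
proof -
  have "coeff (local_poly A u) i = (\<Sum>i'<r. if i' = i then local_coeff A u i' else 0)"
    unfolding local_poly_def coeff_sum by (intro sum.cong) (auto simp: coeff_monom)
  then show ?thesis using assms by simp
qed

lemma codeword_block:
  assumes u: "u < s" and k: "k < m"
  shows "codeword A (u * m + k) = c0 ^ (k * (t - 1)) * homog_eval (r - 1) (local_poly A u) (\<gamma> (u + e * k))"
proof -
  define z where "z = \<gamma> (u + e * k)"
  define c where "c = c0 ^ k"
  define X where "X i = fst z ^ i * snd z ^ (r - 1 - i)" for i
  have g: "homog_eval m (orbit_form v) z = c * orbit_val v u" for v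
    unfolding z_def c_def homog_eval_orbit_form orbit_val_add_mult_period ..
  have "codeword A (u * m + k) = (\<Sum>p\<in>msg_index. A p * homog_eval D (msg_monomial p) z)"
    using block_less[OF u k] by (simp add: codeword_apply coord_index_block[OF k] z_def)
  also have "\<dots> = (\<Sum>p\<in>msg_index.
      A p * (X (fst p) * (c * orbit_val 0 u) ^ snd p * (c * orbit_val 1 u) ^ (t - 1 - snd p)))"
    by (intro sum.cong refl) (simp add: msg_monomial_facts(2) g X_def)
  also have "\<dots> = c ^ (t - 1) *
      (\<Sum>p\<in>msg_index. A p * orbit_val 0 u ^ snd p * orbit_val 1 u ^ (t - 1 - snd p) * X (fst p))"
    unfolding sum_distrib_left
  proof (intro sum.cong refl)
    fix p assume "p \<in> msg_index"
    then have "snd p + (t - 1 - snd p) = t - 1" by (auto simp: msg_index_def)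
    then have "c ^ snd p * c ^ (t - 1 - snd p) = c ^ (t - 1)" by (metis power_add)
    then show "A p * (X (fst p) * (c * orbit_val 0 u) ^ snd p * (c * orbit_val 1 u) ^ (t - 1 - snd p))
        = c ^ (t - 1) * (A p * orbit_val 0 u ^ snd p * orbit_val 1 u ^ (t - 1 - snd p) * X (fst p))"
      by (simp add: power_mult_distrib algebra_simps)
  qed
  also have "(\<Sum>p\<in>msg_index. A p * orbit_val 0 u ^ snd p * orbit_val 1 u ^ (t - 1 - snd p) * X (fst p))
      = (\<Sum>i<r. \<Sum>l<t. A (i, l) * orbit_val 0 u ^ l * orbit_val 1 u ^ (t - 1 - l) * X i)"
    unfolding msg_index_def sum.cartesian_product by (rule sum.cong) (auto simp: case_prod_beta)
  also have "\<dots> = (\<Sum>i<r. local_coeff A u i * X i)"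
    unfolding local_coeff_def by (simp add: sum_distrib_right)
  also have "\<dots> = homog_eval (r - 1) (local_poly A u) z"
    unfolding local_poly_def homog_eval_sum homog_eval_smult X_def by (simp add: homog_eval_monom)
  finally show ?thesis by (simp add: c_def z_def power_mult)
qed

lemma local_poly_eq_0:
  assumes u: "u < s" and k0: "k0 < m"
    and vanish: "\<forall>k<m. k \<noteq> k0 \<longrightarrow> codeword A (u * m + k) = 0"
  shows "local_poly A u = 0"
proof (rule ccontr)
  assume nz: "local_poly A u \<noteq> 0"
  define J where "J = (\<lambda>k. u + e * k) ` ({..<m} - {k0})"
  have J_sub: "J \<subseteq> {..<q + 1}" using orbit_index_less u s_le_e by (auto simp: J_def)
  have "inj_on (\<lambda>k. u + e * k) ({..<m} - {k0})" using two_le_e by (intro inj_onI) simp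
  then have "card J = r" using k0 by (simp add: J_def card_image card_Diff_singleton m_def)
  moreover have "\<forall>j\<in>J. homog_eval (r - 1) (local_poly A u) (\<gamma> j) = 0"
  proof
    fix j assume "j \<in> J"
    then obtain k where k: "k < m" "k \<noteq> k0" "j = u + e * k" unfolding J_def by blast
    then have "c0 ^ (k * (t - 1)) * homog_eval (r - 1) (local_poly A u) (\<gamma> j) = codeword A (u * m + k)"
      using codeword_block[OF u k(1)] by simp
    also have "\<dots> = 0" using vanish k by blast
    finally have "c0 ^ (k * (t - 1)) * homog_eval (r - 1) (local_poly A u) (\<gamma> j) = 0" .
    then show "homog_eval (r - 1) (local_poly A u) (\<gamma> j) = 0" using c0_nonzero by simp
  qed
  ultimately show False using card_\<gamma>_zeros_le[OF J_sub nz degree_local_poly] r_pos by simp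
qed

lemma codeword_local_recovery:
  assumes "u < s" "k0 < m" "\<forall>k<m. k \<noteq> k0 \<longrightarrow> codeword A (u * m + k) = 0"
  shows "codeword A (u * m + k0) = 0"
  using codeword_block[OF assms(1,2)] local_poly_eq_0[OF assms] by simp

text \<open>If the codeword vanishes, so do all local forms, and then for each \<open>i\<close> the form
  \<open>\<Sum>\<^sub>l A (i, l) X\<^sup>l Y\<^sup>t\<^sup>-\<^sup>1\<^sup>-\<^sup>l\<close> of degree \<open>t - 1\<close> vanishes at the \<open>s \<ge> t\<close> distinct points
  \<open>orbit_pt u\<close>, \<open>u < s\<close>.\<close>

lemma msg_eq_0_if_codeword_eq_0:
  assumes zero: "codeword A = 0" and p: "p \<in> msg_index"
  shows "A p = 0"
proof -
  obtain i l where p: "p = (i, l)" "i < r" "l < t" using p by (auto simp: msg_index_def)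
  define Q where "Q = (\<Sum>l<t. smult (A (i, l)) (monom 1 l))"
  have deg_Q: "degree Q \<le> t - 1"
    unfolding Q_def by (rule degree_sum_smult_monom_le)
  have Q_zero: "homog_eval (t - 1) Q (orbit_pt u) = 0" if "u < s" for u
  proof -
    have "local_poly A u = 0" using local_poly_eq_0[OF that, of 0] zero by simp
    then have "local_coeff A u i = 0" using coeff_local_poly[OF p(2), of A u] by simp
    then show ?thesis
      unfolding Q_def homog_eval_sum homog_eval_smult local_coeff_def orbit_pt_def
      by (simp add: homog_eval_monom algebra_simps)
  qed
  have "Q = 0"
  proof (rule ccontr)
    assume "Q \<noteq> 0"
    moreover have "proj_injective orbit_pt {..<s}"
      using proj_injective_subset[OF proj_injective_orbit_pt] s_le_e by simp
    ultimately have "card {..<s} \<le> t - 1"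
      using card_homog_zeros_le deg_Q Q_zero by blast
    then show False using t_le_s t_pos by simp
  qed
  moreover have "coeff Q l = (\<Sum>l'<t. if l' = l then A (i, l') else 0)"
    unfolding Q_def coeff_sum by (intro sum.cong) (auto simp: coeff_monom)
  ultimately show ?thesis using p by simp
qed

lemma card_support_codeword:
  assumes "codeword A \<noteq> 0"
  shows "s * m - D \<le> card {j\<in>{0..<s * m + 1}. codeword A j \<noteq> 0}"
proof -
  have nz: "msg_poly A \<noteq> 0"
  proof
    assume "msg_poly A = 0"
    then have "codeword A = 0" by (simp add: fun_eq_iff codeword_def)
    with assms show False by simp
  qed
  define Z where "Z = {j. j < s * m \<and> codeword A j = 0}"
  have "card (coord_index ` Z) \<le> D"
    using coord_index_less by (intro card_\<gamma>_zeros_le[OF _ nz degree_msg_poly]) (auto simp: Z_def codeword_def)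
  moreover have "card (coord_index ` Z) = card Z"
    using inj_on_coord_index by (intro card_image) (auto intro: inj_on_subset simp: Z_def)
  moreover have "{j\<in>{0..<s * m + 1}. codeword A j \<noteq> 0} = {..<s * m} - Z"
    by (auto simp: Z_def codeword_def)
  moreover have "card ({..<s * m} - Z) = s * m - card Z"
    by (subst card_Diff_subset) (auto simp: Z_def)
  ultimately show ?thesis by simp
qed

definition code :: "(nat \<Rightarrow> 'a) set" where "code = range codeword"

definition unit_word :: "nat \<times> nat \<Rightarrow> nat \<Rightarrow> 'a" where
  "unit_word p = codeword (\<lambda>p'. if p' = p then 1 else 0)"

lemma codeword_add: "codeword A + codeword B = codeword (\<lambda>p. A p + B p)"
  by (simp add: fun_eq_iff codeword_apply sum.distrib algebra_simps)

lemma codeword_scl: "scl c (codeword A) = codeword (\<lambda>p. c * A p)"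
  by (simp add: fun_eq_iff scl_def codeword_apply sum_distrib_left algebra_simps)

lemma sum_apply: "(\<Sum>p\<in>P. f p) j = (\<Sum>p\<in>P. f p j)"
  for f :: "'b \<Rightarrow> nat \<Rightarrow> 'c::comm_monoid_add"
  by (induct P rule: infinite_finite_induct) auto

lemma unit_word_apply:
  assumes "p \<in> msg_index"
  shows "unit_word p j = (if j < s * m then homog_eval D (msg_monomial p) (\<gamma> (coord_index j)) else 0)"
  using assms by (simp add: unit_word_def codeword_apply if_distrib[of "\<lambda>x. x * _"] cong: if_cong)

lemma codeword_eq_sum: "codeword A = (\<Sum>p\<in>msg_index. scl (A p) (unit_word p))"
proof
  fix j
  have "(\<Sum>p\<in>msg_index. scl (A p) (unit_word p)) j = (\<Sum>p\<in>msg_index. A p * unit_word p j)"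
    by (simp add: sum_apply scl_def)
  also have "\<dots> = codeword A j"
    unfolding codeword_apply by (cases "j < s * m") (auto simp: unit_word_apply intro!: sum.cong sum.neutral)
  finally show "codeword A j = (\<Sum>p\<in>msg_index. scl (A p) (unit_word p)) j" ..
qed

lemma codeword_zero: "codeword (\<lambda>p. 0) = 0"
  by (simp add: fun_eq_iff codeword_apply)

lemma subspace_code: "module.subspace scl code"
proof -
  interpret V: vector_space scl by (rule vector_space_scl)
  show ?thesis
    unfolding code_def
  proof (rule V.subspaceI)
    show "0 \<in> range codeword" using codeword_zero by (metis rangeI)
  qed (auto simp: codeword_add codeword_scl)
qed

lemma linear_code_code: "linear_code (s * m + 1) code"
  using subspace_code by (auto simp: linear_code_def code_def codeword_def)

lemma inj_on_unit_word: "inj_on unit_word msg_index"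
proof (rule inj_onI)
  fix p p' assume p: "p \<in> msg_index" and "p' \<in> msg_index" and eq: "unit_word p = unit_word p'"
  define A where "A = (\<lambda>x. (if x = p then 1 else 0) + (- 1) * (if x = p' then 1 else (0::'a)))"
  have "codeword A = unit_word p + scl (- 1) (unit_word p')"
    unfolding A_def unit_word_def codeword_scl codeword_add ..
  then have "codeword A = 0" using eq by (simp add: scl_def fun_eq_iff)
  then have "A p = 0" using msg_eq_0_if_codeword_eq_0 p by blast
  then show "p = p'" by (auto simp: A_def split: if_splits)
qed

lemma code_dim_code: "code_dim code = r * t"
proof -
  interpret V: vector_space scl by (rule vector_space_scl)
  have "V.independent (unit_word ` msg_index)"
  proof (rule V.independent_if_scalars_zero)
    fix f w assume sum: "(\<Sum>x\<in>unit_word ` msg_index. scl (f x) x) = 0" and w: "w \<in> unit_word ` msg_index"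
    have "codeword (\<lambda>p. f (unit_word p)) = 0"
      using sum by (simp add: codeword_eq_sum sum.reindex[OF inj_on_unit_word])
    then show "f w = 0" using w msg_eq_0_if_codeword_eq_0 by blast
  qed simp
  moreover have "code \<subseteq> V.span (unit_word ` msg_index)"
  proof
    fix w assume "w \<in> code"
    then obtain A where "w = codeword A" by (auto simp: code_def)
    then show "w \<in> V.span (unit_word ` msg_index)"
      unfolding codeword_eq_sum by (auto intro: V.span_sum V.span_scale V.span_base)
  qed
  moreover have "unit_word ` msg_index \<subseteq> code" by (auto simp: code_def unit_word_def)
  moreover have "card (unit_word ` msg_index) = r * t"
    using card_image[OF inj_on_unit_word] by (simp add: msg_index_def card_cartesian_product)
  ultimately show ?thesis unfolding code_dim_def by (intro V.dim_unique)
qed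

lemma has_locality_code: "has_locality (s * m + 1) r code"
proof (rule has_locality_subspaceI[OF subspace_code])
  fix i assume i: "i < s * m + 1"
  show "\<exists>I. I \<subseteq> {0..<s * m + 1} - {i} \<and> card I \<le> r \<and> (\<forall>v\<in>code. (\<forall>j\<in>I. v j = 0) \<longrightarrow> v i = 0)"
  proof (cases "i < s * m")
    case False
    then show ?thesis by (intro exI[of _ "{}"]) (auto simp: code_def codeword_def)
  next
    case True
    define u k0 where "u = i div m" and "k0 = i mod m"
    have u: "u < s" and k0: "k0 < m" and i_eq: "i = u * m + k0"
      using block_div_less[OF True] by (simp_all add: u_def k0_def)
    define I where "I = (\<lambda>k. u * m + k) ` ({..<m} - {k0})"
    have "I \<subseteq> {0..<s * m + 1} - {i}"
    proof
      fix j assume "j \<in> I"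
      then obtain k where "k < m" "k \<noteq> k0" "j = u * m + k" by (auto simp: I_def)
      then show "j \<in> {0..<s * m + 1} - {i}" using block_less[OF u \<open>k < m\<close>] i_eq by auto
    qed
    moreover have "card I \<le> r"
      using card_image_le[of "{..<m} - {k0}" "\<lambda>k. u * m + k"] k0 by (simp add: I_def card_Diff_singleton m_def)
    moreover have "\<forall>v\<in>code. (\<forall>j\<in>I. v j = 0) \<longrightarrow> v i = 0"
      using codeword_local_recovery[OF u k0] i_eq by (auto simp: code_def I_def)
    ultimately show ?thesis by blast
  qed
qed

lemma min_dist_code: "s * m + 1 - r * t - t + 1 \<le> min_dist (s * m + 1) code"
proof (rule min_dist_geI[OF subspace_code])
  show "unit_word (0, 0) \<in> code" by (simp add: code_def unit_word_def)
  have "(0, 0) \<in> msg_index" using r_pos t_pos by (simp add: msg_index_def)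
  then show "unit_word (0, 0) \<noteq> 0"
    using msg_eq_0_if_codeword_eq_0[of "\<lambda>p. if p = (0, 0) then 1 else 0" "(0, 0)"]
    unfolding unit_word_def by auto
  fix w assume "w \<in> code" "w \<noteq> 0"
  then obtain A where "w = codeword A" "codeword A \<noteq> 0" by (auto simp: code_def)
  moreover have "s * m + 1 - r * t - t + 1 \<le> s * m - D"
  proof -
    obtain R where R: "r = Suc R" using r_pos by (cases r) auto
    obtain T where T: "t = Suc T" using t_pos by (cases t) auto
    obtain S where S: "s = t + S" using t_le_s le_Suc_ex by blast
    have "s * m = D + ((r + 1) * S + 2)"
      unfolding D_def m_def unfolding R T S by (simp add: algebra_simps)
    moreover have "s * m + 1 = r * t + t + ((r + 1) * S + 1)"
      unfolding m_def unfolding R T S by (simp add: algebra_simps)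
    ultimately show ?thesis by simp
  qed
  ultimately show "s * m + 1 - r * t - t + 1 \<le> card {i\<in>{0..<s * m + 1}. w i \<noteq> 0}"
    using card_support_codeword by fastforce
qed

end

theorem mainTheorem5:
  fixes q r s t :: nat
  assumes "card (UNIV :: 'a::{finite,field} set) = q"
    and "r \<ge> 1" and "(r + 1) dvd (q + 1)"
    and "2 \<le> s" and "s \<le> (q + 1) div (r + 1)"
    and "1 \<le> t" and "t \<le> s"
  shows "\<exists>C :: (nat \<Rightarrow> 'a) set.
           linear_code (s * (r + 1) + 1) C \<and>
           code_dim C = r * t \<and>
           has_locality (s * (r + 1) + 1) r C \<and>
           min_dist (s * (r + 1) + 1) C \<ge> s * (r + 1) + 1 - r * t - t + 1"
proof -
  obtain a b c0 and \<gamma> :: "nat \<Rightarrow> 'a \<times> 'a" where "projective_cycle a b c0 \<gamma> q"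
    using projective_cycle_exists[OF assms(1)] by blast
  then interpret lrc_construction a b c0 \<gamma> q r s t
    using assms(2-7) by (intro lrc_construction.intro lrc_construction_axioms.intro)
  show ?thesis
    using linear_code_code code_dim_code has_locality_code min_dist_code unfolding m_def by blast
qed

end
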